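(* Let $d\ge1$, let $g$ be a (nondegenerate) Gaussian probability density on $\mathbb{R}^d$, and let $V:\mathbb{R}^d\to(0,\infty)$ be of class $C^{1,1}_{\mathrm{loc}}$, bounded from below by a positive constant, with $\int_{\mathbb{R}^d}V^{-d}=1$. Assume there exists $A>0$ such that \[ \frac{|\nabla V(x)|}{V(x)}\le\frac{A}{1+|x|}\qquad\text{for all }x\in\mathbb{R}^d. \] Then the monotone transport $T$ from $V^{-d}$ to $g$ satisfies \[ |T(x)|\le C\sqrt{1+\log(1+|x|)}\qquad\text{for all }x\in\mathbb{R}^d, \] for some constant $C>0$ depending only on the data. *)

theory Defs
  imports "HOL-Analysis.Analysis" "HOL-Probability.Probability"
begin

definition pos_def_matrix :: "real^'n^'n \<Rightarrow> bool" where
  "pos_def_matrix S \<longleftrightarrow> transpose S = S \<and> (\<forall>v. v \<noteq> 0 \<longrightarrow> v \<bullet> (S *v v) > 0)"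

definition gaussian_density :: "real^'n \<Rightarrow> real^'n^'n \<Rightarrow> real^'n \<Rightarrow> real" where
  "gaussian_density m S x =
     exp (- ((x - m) \<bullet> (matrix_inv S *v (x - m))) / 2)
       / sqrt ((2 * pi) ^ CARD('n) * det S)"

definition monotone_transport ::
    "(real^'n) measure \<Rightarrow> (real^'n) measure \<Rightarrow> (real^'n \<Rightarrow> real^'n) \<Rightarrow> bool" where
  "monotone_transport \<mu> \<nu> T \<longleftrightarrow>
     (\<exists>\<phi>. convex_on UNIV \<phi> \<and> (\<forall>x. (\<phi> has_derivative (\<lambda>h. T x \<bullet> h)) (at x)))
     \<and> distr \<mu> lborel T = \<nu>"

end

theory Submission
  imports Defs
begin

text \<open>
  Since \<open>T\<close> is the gradient of a convex function it is monotone, so if \<open>\<bar>T x\<bar> = R\<close> then \<open>T\<close> maps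
  the ball of radius \<open>1/2\<close> centred at \<open>x + T x / R\<close> into \<open>{\<bar>z\<bar> \<ge> R/3}\<close>. The logarithmic gradient
  bound makes \<open>V\<close> grow at most like \<open>(1 + \<bar>x\<bar>)\<^sup>A\<close>, so the source measure of that ball is at least
  \<open>c (1 + \<bar>x\<bar>)\<^sup>-\<^sup>d\<^sup>A\<close>, while the Gaussian mass of its image is at most \<open>K exp (- l R\<^sup>2)\<close> once
  \<open>R \<ge> 3 \<bar>m\<bar>\<close>. Comparing the two and taking logarithms gives \<open>R\<^sup>2 \<lesssim> 1 + log (1 + \<bar>x\<bar>)\<close>.
\<close>

lemma has_real_derivative_along_line:
  fixes \<phi> :: "'a::real_normed_vector \<Rightarrow> real"
  assumes "(\<phi> has_derivative D) (at (x + t *\<^sub>R v))"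
  shows "((\<lambda>s. \<phi> (x + s *\<^sub>R v)) has_real_derivative D v) (at t)"
proof -
  have "((\<lambda>s. x + s *\<^sub>R v) has_derivative (\<lambda>s. s *\<^sub>R v)) (at t)"
    by (auto intro!: derivative_eq_intros)
  from has_derivative_compose[OF this assms]
  have "((\<lambda>s. \<phi> (x + s *\<^sub>R v)) has_derivative (\<lambda>s. D v * s)) (at t)"
    using linear_cmul[OF has_derivative_linear[OF assms]] by (simp add: mult.commute)
  then show ?thesis
    unfolding has_field_derivative_def .
qed

lemma convex_on_ge_tangent:
  fixes \<phi> :: "'a::real_normed_vector \<Rightarrow> real"
  assumes cvx: "convex_on UNIV \<phi>" and deriv: "(\<phi> has_derivative D) (at x)"
  shows "D (y - x) \<le> \<phi> y - \<phi> x"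
proof -
  define g where "g t = \<phi> (x + t *\<^sub>R (y - x))" for t :: real
  have "convex_on UNIV g"
    unfolding convex_on_def g_def
  proof (intro conjI convex_UNIV ballI allI impI)
    fix s t u v :: real assume uv: "0 \<le> u" "0 \<le> v" "u + v = 1"
    have "x + (u *\<^sub>R s + v *\<^sub>R t) *\<^sub>R (y - x) = u *\<^sub>R (x + s *\<^sub>R (y - x)) + v *\<^sub>R (x + t *\<^sub>R (y - x))"
      using uv by (simp add: algebra_simps flip: scaleR_add_left)
    then show "\<phi> (x + (u *\<^sub>R s + v *\<^sub>R t) *\<^sub>R (y - x)) \<le> u * \<phi> (x + s *\<^sub>R (y - x)) + v * \<phi> (x + t *\<^sub>R (y - x))"
      using cvx uv unfolding convex_on_def by auto
  qed
  moreover have "(g has_real_derivative D (y - x)) (at 0)"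
    unfolding g_def by (rule has_real_derivative_along_line) (use deriv in simp)
  ultimately have "D (y - x) * (1 - 0) \<le> g 1 - g 0"
    by (intro convex_on_imp_above_tangent) auto
  then show ?thesis by (simp add: g_def)
qed

lemma convex_gradient_monotone:
  fixes \<phi> :: "'a::real_inner \<Rightarrow> real"
  assumes "convex_on UNIV \<phi>" and "\<And>x. (\<phi> has_derivative (\<lambda>h. T x \<bullet> h)) (at x)"
  shows "0 \<le> (T y - T x) \<bullet> (y - x)"
  using convex_on_ge_tangent[OF assms(1) assms(2)[of x], of y]
    convex_on_ge_tangent[OF assms(1) assms(2)[of y], of x]
  by (simp add: inner_diff_left inner_diff_right inner_commute)

lemma gradient_borel_measurable:
  fixes \<phi> :: "'a::euclidean_space \<Rightarrow> real"
  assumes deriv: "\<And>x. (\<phi> has_derivative (\<lambda>h. T x \<bullet> h)) (at x)"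
  shows "T \<in> borel_measurable borel"
proof -
  have cont: "continuous_on UNIV \<phi>"
    using deriv has_derivative_continuous continuous_at_imp_continuous_on by blast
  have seq: "filterlim (\<lambda>n. inverse (real (Suc n))) (at 0) sequentially"
    by (rule tendsto_imp_filterlim_at_right[THEN filterlim_mono, OF LIMSEQ_inverse_real_of_nat])
       (auto simp: at_within_le_at)
  show ?thesis
  proof (subst borel_measurable_euclidean_space, intro ballI)
    fix i :: 'a assume i: "i \<in> Basis"
    define q where "q n x = (\<phi> (x + inverse (real (Suc n)) *\<^sub>R i) - \<phi> x) / inverse (real (Suc n))"
      for n x
    show "(\<lambda>x. T x \<bullet> i) \<in> borel_measurable borel"
    proof (rule borel_measurable_LIMSEQ_real[where u=q])
      fix n show "q n \<in> borel_measurable borel"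
        unfolding q_def
        by (intro borel_measurable_continuous_onI continuous_intros
            continuous_on_compose2[OF cont]) auto
    next
      fix x :: 'a
      have "((\<lambda>s. \<phi> (x + s *\<^sub>R i)) has_real_derivative T x \<bullet> i) (at 0)"
        by (rule has_real_derivative_along_line) (use deriv in simp)
      then have "((\<lambda>s. (\<phi> (x + s *\<^sub>R i) - \<phi> x) / s) \<longlongrightarrow> T x \<bullet> i) (at 0)"
        by (simp add: has_field_derivative_iff)
      from filterlim_compose[OF this seq]
      show "(\<lambda>n. q n x) \<longlonglongrightarrow> T x \<bullet> i" unfolding q_def by simp
    qed
  qed
qed

lemma monotone_transportD:
  assumes "monotone_transport \<mu> \<nu> T"
  shows "\<And>x y. 0 \<le> (T y - T x) \<bullet> (y - x)" and "T \<in> borel_measurable borel"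
    and "distr \<mu> lborel T = \<nu>"
  using assms convex_gradient_monotone gradient_borel_measurable
  unfolding monotone_transport_def by blast+

text \<open>Integrating \<open>(ln V)' \<le> A / (1 + t)\<close> along the segment from \<open>0\<close> to \<open>y\<close>.\<close>

lemma log_gradient_bound_imp_polynomial_growth:
  fixes V :: "'a::real_inner \<Rightarrow> real"
  assumes pos: "\<And>x. V x > 0" and deriv: "\<And>x. (V has_derivative (\<lambda>h. DV x \<bullet> h)) (at x)"
    and decay: "\<And>x. norm (DV x) / V x \<le> A / (1 + norm x)"
  shows "V y \<le> V 0 * (1 + norm y) powr A"
proof -
  define h where "h t = ln (V (t *\<^sub>R y)) - A * ln (1 + t * norm y)" for t
  have "h 1 \<le> h 0"
  proof (rule DERIV_nonpos_imp_nonincreasing[of 0 1 h])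
    fix t :: real assume t: "0 \<le> t" "t \<le> 1"
    define z where "z = t *\<^sub>R y"
    have pt: "0 < 1 + t * norm y" using t by (simp add: add_pos_nonneg)
    have "((\<lambda>s. V (s *\<^sub>R y)) has_real_derivative DV z \<bullet> y) (at t)"
      using has_real_derivative_along_line[of V _ 0 t y] deriv by (simp add: z_def)
    then have "(h has_real_derivative DV z \<bullet> y / V z - A * (norm y / (1 + t * norm y))) (at t)"
      unfolding h_def z_def using pt pos
      by (auto intro!: derivative_eq_intros simp: divide_inverse mult.commute)
    moreover have "DV z \<bullet> y / V z \<le> A * (norm y / (1 + t * norm y))"
    proof -
      have "DV z \<bullet> y / V z \<le> norm (DV z) / V z * norm y"
        using norm_cauchy_schwarz[of "DV z" y] pos[of z] by (simp add: divide_right_mono)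
      also have "\<dots> \<le> A / (1 + t * norm y) * norm y"
        using decay[of z] t by (intro mult_right_mono) (auto simp: z_def abs_of_nonneg)
      finally show ?thesis by simp
    qed
    ultimately show "\<exists>d. (h has_real_derivative d) (at t) \<and> d \<le> 0" by force
  qed simp
  then have "ln (V y) \<le> ln (V 0) + A * ln (1 + norm y)" by (simp add: h_def)
  then have "V y \<le> exp (ln (V 0) + A * ln (1 + norm y))"
    using pos by (metis exp_le_cancel_iff exp_ln)
  also have "\<dots> = V 0 * (1 + norm y) powr A"
    using pos[of 0] by (simp add: exp_add powr_def mult.commute add_nonneg_eq_0_iff)
  finally show ?thesis .
qed

text \<open>With \<open>e = sgn (T x)\<close> and \<open>y = x + e + w\<close>, \<open>\<bar>w\<bar> < 1/2\<close>, monotonicity gives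
  \<open>T y \<bullet> (e + w) \<ge> T x \<bullet> (e + w) \<ge> \<bar>T x\<bar> / 2\<close>, while \<open>\<bar>e + w\<bar> \<le> 3/2\<close>.\<close>

lemma monotone_map_large_on_ball:
  fixes T :: "'a::real_inner \<Rightarrow> 'a"
  assumes mono: "\<And>x y. 0 \<le> (T y - T x) \<bullet> (y - x)" and y: "dist (x + sgn (T x)) y < 1/2"
  shows "norm (T x) / 3 \<le> norm (T y)"
proof (cases "T x = 0")
  case False
  define R where "R = norm (T x)"
  define e where "e = sgn (T x)"
  define w where "w = y - x - e"
  have Rp: "R > 0" and ne: "norm e = 1" and Te: "T x \<bullet> e = R"
    using False by (simp_all add: R_def e_def sgn_div_norm dot_square_norm power2_eq_square)
  have nw: "norm w < 1/2"
    using y by (simp add: w_def e_def dist_norm norm_minus_commute algebra_simps)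
  have "R - R * norm w \<le> T x \<bullet> (e + w)"
    using Cauchy_Schwarz_ineq2[of "T x" w] Te by (simp add: R_def inner_add_right)
  moreover have "R * norm w \<le> R / 2" using nw Rp by simp
  moreover have "T x \<bullet> (e + w) \<le> T y \<bullet> (e + w)"
    using mono[of x y] by (simp add: w_def inner_diff_left inner_diff_right)
  moreover have "norm (e + w) \<le> 3/2"
    using norm_triangle_ineq[of e w] ne nw by simp
  then have "T y \<bullet> (e + w) \<le> norm (T y) * (3/2)"
    using norm_cauchy_schwarz[of "T y" "e + w"] by (meson mult_left_mono norm_ge_zero order_trans)
  ultimately show ?thesis by (simp add: R_def)
qed simp

lemma monotone_pushforward_far_mass_ge:
  fixes T :: "'a::euclidean_space \<Rightarrow> 'a"
  assumes mono: "\<And>x y. 0 \<le> (T y - T x) \<bullet> (y - x)"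
    and T_meas: "T \<in> borel_measurable borel" and f_meas: "f \<in> borel_measurable borel"
    and push: "distr (density lborel f) lborel T = \<nu>"
    and f_lb: "\<And>y. dist x y \<le> 3/2 \<Longrightarrow> ennreal c \<le> f y" and c: "0 \<le> c"
  shows "ennreal (c * (unit_ball_vol DIM('a) / 2 ^ DIM('a)))
           \<le> emeasure \<nu> {z. norm (T x) / 3 \<le> norm z}"
proof -
  define B where "B = ball (x + sgn (T x)) (1/2)"
  define F :: "'a set" where "F = {z. norm (T x) / 3 \<le> norm z}"
  have F_sets: "F \<in> sets borel" unfolding F_def by measurable
  have near: "dist x y \<le> 3/2" if "y \<in> B" for y
    using that dist_triangle[of x y "x + sgn (T x)"]
    by (simp add: B_def dist_norm norm_sgn dist_commute split: if_splits)
  have "ennreal (c * (unit_ball_vol DIM('a) / 2 ^ DIM('a))) = ennreal c * emeasure lborel B"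
    using c by (subst ennreal_mult') (simp_all add: B_def emeasure_ball power_divide)
  also have "\<dots> = (\<integral>\<^sup>+y. ennreal c * indicator B y \<partial>lborel)"
    by (simp add: B_def nn_integral_cmult_indicator)
  also have "\<dots> \<le> (\<integral>\<^sup>+y. f y * indicator B y \<partial>lborel)"
    by (intro nn_integral_mono) (auto split: split_indicator intro: f_lb[OF near])
  also have "\<dots> = emeasure (density lborel f) B"
    by (simp add: B_def emeasure_density f_meas)
  also have "\<dots> \<le> emeasure (density lborel f) (T -` F)"
    using monotone_map_large_on_ball[OF mono] measurable_sets[OF T_meas F_sets]
    by (intro emeasure_mono) (auto simp: B_def F_def)
  also have "\<dots> = emeasure \<nu> F"
    using F_sets T_meas
    by (simp add: push[symmetric] emeasure_distr measurable_cong_sets[OF sets_density])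
  finally show ?thesis by (simp add: F_def)
qed

lemma monotone_pushforward_polynomial_le_gaussian_tail:
  fixes T :: "'a::euclidean_space \<Rightarrow> 'a"
  assumes mono: "\<And>x y. 0 \<le> (T y - T x) \<bullet> (y - x)"
    and T_meas: "T \<in> borel_measurable borel" and f_meas: "f \<in> borel_measurable borel"
    and push: "distr (density lborel f) lborel T = \<nu>"
    and f_lb: "\<And>y. dist x y \<le> 3/2 \<Longrightarrow> ennreal (c * (1 + norm x) powr (- k)) \<le> f y"
    and c: "0 \<le> c" and K: "0 \<le> K"
    and tail: "\<And>\<rho>. \<rho> \<ge> 0 \<Longrightarrow> emeasure \<nu> {z. \<rho> \<le> norm (z - m)} \<le> ennreal (K * exp (- l * \<rho>\<^sup>2))"
    and far: "3 * norm m \<le> norm (T x)"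
  shows "c * (unit_ball_vol DIM('a) / 2 ^ DIM('a)) * (1 + norm x) powr (- k)
           \<le> K * exp (- l * (norm (T x) / 3 - norm m)\<^sup>2)"
proof -
  define \<rho> where "\<rho> = norm (T x) / 3 - norm m"
  have "ennreal (c * (1 + norm x) powr (- k) * (unit_ball_vol DIM('a) / 2 ^ DIM('a)))
          \<le> emeasure \<nu> {z. norm (T x) / 3 \<le> norm z}"
    using c by (intro monotone_pushforward_far_mass_ge[OF mono T_meas f_meas push f_lb]) auto
  also have "\<dots> \<le> emeasure \<nu> {z. \<rho> \<le> norm (z - m)}"
    using push[symmetric]
    by (intro emeasure_mono) (auto simp: \<rho>_def intro: order_trans[OF _ norm_triangle_ineq2])
  also have "\<dots> \<le> ennreal (K * exp (- l * \<rho>\<^sup>2))"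
    using far by (intro tail) (simp add: \<rho>_def)
  finally show ?thesis
    using K by (simp add: ennreal_le_iff \<rho>_def mult_ac)
qed

lemma pos_def_matrix_invertible:
  fixes S :: "real^'n^'n"
  assumes "pos_def_matrix S"
  shows "invertible S"
proof -
  have "S *v x = 0 \<Longrightarrow> x = 0" for x
    using assms unfolding pos_def_matrix_def by (metis inner_zero_right less_irrefl)
  then show ?thesis
    unfolding invertible_left_inverse using matrix_left_invertible_ker by blast
qed

lemma matrix_mul_matrix_inv:
  fixes S :: "real^'n^'n"
  assumes "invertible S"
  shows "S ** matrix_inv S = mat 1"
proof -
  have "\<exists>S'. S ** S' = mat 1 \<and> S' ** S = mat 1" using assms by (simp add: invertible_def)
  from someI_ex[OF this] show ?thesis unfolding matrix_inv_def by blast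
qed

lemma pos_def_matrix_inv_quadratic_ge:
  fixes S :: "real^'n^'n"
  assumes S: "pos_def_matrix S"
  shows "\<exists>l>0. \<forall>w. l * (norm w)\<^sup>2 \<le> w \<bullet> (matrix_inv S *v w)"
proof -
  define Q where "Q w = w \<bullet> (matrix_inv S *v w)" for w :: "real^'n"
  have Q_pos: "Q w > 0" if "w \<noteq> 0" for w
  proof -
    define u where "u = matrix_inv S *v w"
    have Su: "S *v u = w"
      by (simp add: u_def matrix_vector_mul_assoc matrix_mul_matrix_inv[OF pos_def_matrix_invertible[OF S]])
    have "u \<noteq> 0" using Su that by auto
    with S have "u \<bullet> (S *v u) > 0" unfolding pos_def_matrix_def by auto
    with Su show ?thesis by (simp add: Q_def u_def[symmetric] inner_commute)
  qed
  have Q_scale: "Q (c *\<^sub>R w) = c\<^sup>2 * Q w" for c w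
    by (simp add: Q_def matrix_vector_mult_scaleR power2_eq_square)
  have "continuous_on UNIV Q"
    unfolding Q_def
    by (intro continuous_intros bounded_linear.continuous_on[OF matrix_vector_mul_bounded_linear])
  then obtain w0 where w0: "norm w0 = 1" and min: "\<And>w. norm w = 1 \<Longrightarrow> Q w0 \<le> Q w"
    using continuous_attains_inf[of "sphere 0 1" Q] by (fastforce intro: continuous_on_subset)
  show ?thesis
  proof (intro exI[of _ "Q w0"] conjI allI)
    show "Q w0 > 0" by (rule Q_pos) (use w0 in auto)
  next
    fix w :: "real^'n"
    show "Q w0 * (norm w)\<^sup>2 \<le> w \<bullet> (matrix_inv S *v w)"
    proof (cases "w = 0")
      case False
      then have "Q w = Q (sgn w) * (norm w)\<^sup>2"
        using Q_scale[of "norm w" "sgn w"] by (simp add: sgn_div_norm mult.commute)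
      moreover have "Q w0 \<le> Q (sgn w)" using False by (simp add: min norm_sgn)
      ultimately have "Q w0 * (norm w)\<^sup>2 \<le> Q w" by (simp add: mult_right_mono)
      then show ?thesis by (simp add: Q_def)
    qed simp
  qed
qed

lemma gaussian_density_borel_measurable [measurable]:
  "gaussian_density m S \<in> borel_measurable borel"
  unfolding gaussian_density_def divide_inverse
  by (intro borel_measurable_continuous_onI continuous_intros
      bounded_linear.continuous_on[OF matrix_vector_mul_bounded_linear])

text \<open>On \<open>{\<rho> \<le> \<bar>z - m\<bar>}\<close> the density is at most \<open>exp (- l \<rho>\<^sup>2 / 4)\<close> times its own rescaling
  by \<open>1/\<surd>2\<close> about \<open>m\<close>, whose integral is \<open>\<surd>2\<^sup>d\<close>. The total mass is assumed rather than computed;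
  it also shows that the normalising constant is positive, so nothing about \<open>det S\<close> is needed.\<close>

lemma gaussian_density_tail:
  fixes S :: "real^'n^'n"
  assumes S: "pos_def_matrix S"
    and total: "(\<integral>\<^sup>+x. ennreal (gaussian_density m S x) \<partial>lborel) = 1"
  shows "\<exists>l>0. \<forall>\<rho>\<ge>0.
           emeasure (density lborel (\<lambda>x. ennreal (gaussian_density m S x))) {z. \<rho> \<le> norm (z - m)}
             \<le> ennreal ((sqrt 2) ^ CARD('n) * exp (- l * \<rho>\<^sup>2))"
proof -
  obtain l where l: "l > 0" and Q_ge: "\<And>w. l * (norm w)\<^sup>2 \<le> w \<bullet> (matrix_inv S *v w)"
    using pos_def_matrix_inv_quadratic_ge[OF S] by blast
  define K where "K = sqrt ((2 * pi) ^ CARD('n) * det S)"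
  define Q where "Q z = (z - m) \<bullet> (matrix_inv S *v (z - m))" for z
  define H where "H z = ennreal (exp (- Q z / 4) / K)" for z
  have g: "gaussian_density m S z = exp (- Q z / 2) / K" for z
    unfolding gaussian_density_def Q_def K_def by simp
  have K: "K > 0"
  proof (rule ccontr)
    assume "\<not> K > 0"
    then have "ennreal (gaussian_density m S z) = 0" for z
      unfolding g by (simp add: divide_nonneg_nonpos ennreal_neg)
    with total show False by simp
  qed
  have Q_cont: "continuous_on UNIV Q"
    unfolding Q_def
    by (intro continuous_intros bounded_linear.continuous_on[OF matrix_vector_mul_bounded_linear])
  have [measurable]: "H \<in> borel_measurable borel"
    unfolding H_def using K
    by (intro measurable_compose[OF _ measurable_ennreal] borel_measurable_continuous_onI
        continuous_intros continuous_on_compose2[OF Q_cont]) auto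
  have H_rescaled: "H (m - sqrt 2 *\<^sub>R m + sqrt 2 *\<^sub>R x) = ennreal (gaussian_density m S x)" for x
  proof -
    have "m - sqrt 2 *\<^sub>R m + sqrt 2 *\<^sub>R x - m = sqrt 2 *\<^sub>R (x - m)" by (simp add: algebra_simps)
    then have "Q (m - sqrt 2 *\<^sub>R m + sqrt 2 *\<^sub>R x) = 2 * Q x"
      by (simp add: Q_def matrix_vector_mult_scaleR)
    then show ?thesis unfolding H_def g by simp
  qed
  have H_integral: "(\<integral>\<^sup>+x. H x \<partial>lborel) = ennreal ((sqrt 2) ^ CARD('n))"
    by (subst lborel_affine[of "sqrt 2" "m - sqrt 2 *\<^sub>R m"])
       (simp_all add: nn_integral_density nn_integral_distr nn_integral_cmult H_rescaled total)
  show ?thesis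
  proof (intro exI[of _ "l / 4"] conjI allI impI)
    fix \<rho> :: real assume \<rho>: "\<rho> \<ge> 0"
    define F where "F = {z. \<rho> \<le> norm (z - m)}"
    have "ennreal (gaussian_density m S x) * indicator F x \<le> ennreal (exp (- l / 4 * \<rho>\<^sup>2)) * H x" for x
    proof (cases "x \<in> F")
      case True
      then have "l * \<rho>\<^sup>2 \<le> Q x"
        using Q_ge[of "x - m"] \<rho> l by (smt (verit) F_def Q_def mem_Collect_eq mult_left_mono power_mono)
      then have "gaussian_density m S x \<le> exp (- l / 4 * \<rho>\<^sup>2) * (exp (- Q x / 4) / K)"
        using K by (auto simp: g exp_add[symmetric] intro!: divide_right_mono)
      then show ?thesis using True K by (simp add: H_def ennreal_mult'' [symmetric])
    qed simp
    then have "emeasure (density lborel (\<lambda>x. ennreal (gaussian_density m S x))) F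
                 \<le> (\<integral>\<^sup>+x. ennreal (exp (- l / 4 * \<rho>\<^sup>2)) * H x \<partial>lborel)"
      by (simp add: F_def emeasure_density nn_integral_mono)
    also have "\<dots> = ennreal ((sqrt 2) ^ CARD('n) * exp (- (l / 4) * \<rho>\<^sup>2))"
      by (subst nn_integral_cmult) (simp_all add: H_integral ennreal_mult'' [symmetric] mult.commute)
    finally show "emeasure (density lborel (\<lambda>x. ennreal (gaussian_density m S x))) {z. \<rho> \<le> norm (z - m)}
        \<le> ennreal ((sqrt 2) ^ CARD('n) * exp (- (l / 4) * \<rho>\<^sup>2))"
      by (simp add: F_def)
  qed (use l in simp)
qed

lemma polynomial_growth_imp_inverse_power_ge:
  fixes V :: "'a::real_normed_vector \<Rightarrow> real"
  assumes pos: "\<And>x. V x > 0" and growth: "\<And>y. V y \<le> a * (1 + norm y) powr A"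
    and A: "A \<ge> 0" and r: "r \<ge> 0" and xy: "dist x y \<le> r"
  shows "inverse ((a * (1 + r) powr A) ^ d) * (1 + norm x) powr (- (d * A)) \<le> inverse (V y ^ d)"
proof -
  have a: "a > 0"
    using pos[of y] growth[of y] by (smt (verit) norm_ge_zero powr_gt_zero mult_nonpos_nonneg)
  have "1 + norm y \<le> (1 + r) * (1 + norm x)"
    using norm_triangle_ineq[of x "y - x"] xy r
    by (simp add: dist_norm norm_minus_commute algebra_simps) (smt (verit) mult_nonneg_nonneg norm_ge_zero)
  then have "V y \<le> a * (1 + r) powr A * (1 + norm x) powr A"
    using growth[of y] a A r
    by (smt (verit) mult_left_mono norm_ge_zero powr_mono2 powr_mult mult.assoc)
  then have "V y ^ d \<le> (a * (1 + r) powr A * (1 + norm x) powr A) ^ d"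
    using pos[of y] by (intro power_mono) auto
  also have "\<dots> = (a * (1 + r) powr A) ^ d * (1 + norm x) powr (d * A)"
    by (simp add: power_mult_distrib powr_power add_nonneg_eq_0_iff)
  finally have "V y ^ d \<le> (a * (1 + r) powr A) ^ d * (1 + norm x) powr (d * A)" .
  then have "inverse ((a * (1 + r) powr A) ^ d * (1 + norm x) powr (d * A)) \<le> inverse (V y ^ d)"
    using pos[of y] by (intro le_imp_inverse_le) auto
  then show ?thesis by (simp add: powr_minus mult_ac)
qed

lemma exp_square_le_polynomial_imp_le_sqrt_log:
  fixes c K l k t \<rho> :: real
  assumes c: "c > 0" and l: "l > 0" and k: "k \<ge> 0" and t: "t \<ge> 0"
    and ineq: "c * (1 + t) powr (- k) \<le> K * exp (- l * \<rho>\<^sup>2)"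
  shows "\<rho> \<le> sqrt ((\<bar>ln K - ln c\<bar> + k) / l) * sqrt (1 + ln (1 + t))"
proof -
  define L where "L = ln (1 + t)"
  have L: "L \<ge> 0" using t by (simp add: L_def)
  have lhs: "0 < c * (1 + t) powr (- k)" using c t by simp
  then have K: "K > 0" using ineq by (smt (verit) exp_gt_zero mult_nonpos_nonneg)
  have "ln c - k * L \<le> ln K - l * \<rho>\<^sup>2"
    using ln_le_cancel_iff[OF lhs, of "K * exp (- l * \<rho>\<^sup>2)"] ineq K c t
    by (simp add: ln_mult ln_powr L_def)
  moreover have "(ln K - ln c) + k * L \<le> (\<bar>ln K - ln c\<bar> + k) * (1 + L)"
    using L k by (simp add: algebra_simps) (smt (verit) abs_ge_zero mult_nonneg_nonneg)
  ultimately have "\<rho>\<^sup>2 \<le> (\<bar>ln K - ln c\<bar> + k) / l * (1 + L)"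
    using l by (simp add: field_simps)
  then have "\<bar>\<rho>\<bar> \<le> sqrt ((\<bar>ln K - ln c\<bar> + k) / l * (1 + L))"
    using real_sqrt_le_mono by fastforce
  then show ?thesis
    unfolding real_sqrt_mult L_def using abs_ge_self[of \<rho>] by linarith
qed

lemma exp_shifted_square_le_polynomial_imp_le_sqrt_log:
  fixes c K l k M R t :: real
  assumes c: "c > 0" and l: "l > 0" and k: "k \<ge> 0" and t: "t \<ge> 0" and M: "M \<ge> 0"
    and ineq: "3 * M \<le> R \<Longrightarrow> c * (1 + t) powr (- k) \<le> K * exp (- l * (R / 3 - M)\<^sup>2)"
  shows "R \<le> (3 * sqrt ((\<bar>ln K - ln c\<bar> + k) / l) + 3 * M + 1) * sqrt (1 + ln (1 + t))"
proof -
  define a where "a = sqrt ((\<bar>ln K - ln c\<bar> + k) / l)"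
  define s where "s = sqrt (1 + ln (1 + t))"
  have "1 \<le> s" using t by (simp add: s_def)
  then have "3 * M + 1 \<le> (3 * M + 1) * s" and "0 \<le> 3 * a * s"
    using mult_left_mono[of 1 s "3 * M + 1"] M l k by (simp_all add: a_def)
  moreover have "R \<le> 3 * a * s + 3 * M"
  proof (cases "3 * M \<le> R")
    case True
    with exp_square_le_polynomial_imp_le_sqrt_log[OF c l k t ineq] show ?thesis
      by (simp add: a_def s_def)
  qed (use \<open>0 \<le> 3 * a * s\<close> in linarith)
  ultimately show ?thesis
    unfolding a_def[symmetric] s_def[symmetric] distrib_right by linarith
qed

text \<open>Only positivity, differentiability, the gradient bound and the normalisation of \<open>V\<close> enter
  the estimate.\<close>

theorem theorem2p2:
  fixes V :: "real^'n \<Rightarrow> real"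
    and DV :: "real^'n \<Rightarrow> real^'n"
    and m :: "real^'n" and S :: "real^'n^'n"
    and T :: "real^'n \<Rightarrow> real^'n"
    and A :: real
  assumes S: "pos_def_matrix S"
    and V_pos: "\<forall>x. V x > 0"
    and V_lb: "\<exists>c>0. \<forall>x. V x \<ge> c"
    and V_grad: "\<forall>x. (V has_derivative (\<lambda>h. DV x \<bullet> h)) (at x)"
    and V_C11loc: "\<forall>x. \<exists>r>0. \<exists>L. \<forall>y\<in>ball x r. \<forall>z\<in>ball x r.
                      norm (DV y - DV z) \<le> L * dist y z"
    and V_int: "(\<integral>\<^sup>+ x. ennreal (inverse (V x ^ CARD('n))) \<partial>lborel) = 1"
    and A_pos: "A > 0"
    and V_decay: "\<forall>x. norm (DV x) / V x \<le> A / (1 + norm x)"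
    and T: "monotone_transport (density lborel (\<lambda>x. ennreal (inverse (V x ^ CARD('n)))))
                               (density lborel (\<lambda>x. ennreal (gaussian_density m S x))) T"
  shows "\<exists>C>0. \<forall>x. norm (T x) \<le> C * sqrt (1 + ln (1 + norm x))"
proof -
  define d where "d = CARD('n)"
  define f where "f = (\<lambda>x. ennreal (inverse (V x ^ d)))"
  define \<nu> where "\<nu> = density lborel (\<lambda>x. ennreal (gaussian_density m S x))"
  have mono: "\<And>x y. 0 \<le> (T y - T x) \<bullet> (y - x)" and T_meas: "T \<in> borel_measurable borel"
    and push: "distr (density lborel f) lborel T = \<nu>"
    using monotone_transportD[OF T] by (simp_all add: f_def \<nu>_def d_def)
  have "continuous_on UNIV V"
    using V_grad has_derivative_continuous continuous_at_imp_continuous_on by blast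
  then have [measurable]: "V \<in> borel_measurable borel"
    by (rule borel_measurable_continuous_onI)
  have f_meas: "f \<in> borel_measurable borel" unfolding f_def by measurable
  have "(\<integral>\<^sup>+x. ennreal (gaussian_density m S x) \<partial>lborel) = emeasure \<nu> UNIV"
    by (simp add: \<nu>_def emeasure_density)
  also have "\<dots> = emeasure (density lborel f) UNIV"
    using T_meas by (simp add: push[symmetric] emeasure_distr measurable_cong_sets[OF sets_density])
  also have "\<dots> = 1" using V_int f_meas by (simp add: emeasure_density, simp add: f_def d_def)
  finally obtain l where l: "l > 0" and tail: "\<And>\<rho>. \<rho> \<ge> 0 \<Longrightarrow>
      emeasure \<nu> {z. \<rho> \<le> norm (z - m)} \<le> ennreal ((sqrt 2) ^ d * exp (- l * \<rho>\<^sup>2))"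
    using gaussian_density_tail[OF S] unfolding \<nu>_def d_def by blast
  have growth: "\<And>y. V y \<le> V 0 * (1 + norm y) powr A"
    by (rule log_gradient_bound_imp_polynomial_growth) (use V_pos V_grad V_decay in auto)
  define c0 where "c0 = inverse ((V 0 * (1 + 3/2) powr A) ^ d)"
  have f_lb: "dist x y \<le> 3/2 \<Longrightarrow> ennreal (c0 * (1 + norm x) powr (- (d * A))) \<le> f y" for x y
    unfolding f_def c0_def
    by (intro ennreal_leI polynomial_growth_imp_inverse_power_ge[OF _ growth]) (use V_pos A_pos in auto)
  have c0: "c0 > 0" using V_pos by (simp add: c0_def)
  define c where "c = c0 * (unit_ball_vol d / 2 ^ d)"
  have "c * (1 + norm x) powr (- (d * A)) \<le> (sqrt 2) ^ d * exp (- l * (norm (T x) / 3 - norm m)\<^sup>2)"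
    if "3 * norm m \<le> norm (T x)" for x
    using monotone_pushforward_polynomial_le_gaussian_tail[OF mono T_meas f_meas push f_lb[of x] _ _ tail that]
      c0 by (simp add: c_def d_def)
  moreover have "c > 0" using c0 by (simp add: c_def)
  ultimately show ?thesis
    using exp_shifted_square_le_polynomial_imp_le_sqrt_log[of c l "d * A" _ "norm m"] l A_pos
    by (intro exI[of _ "3 * sqrt ((\<bar>ln ((sqrt 2) ^ d) - ln c\<bar> + d * A) / l) + 3 * norm m + 1"])
       (auto intro: add_nonneg_pos)
qed

end
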